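(* If $C \subseteq \mathbb{Z}$ is a nonempty finite set, then there exists a set $W \subseteq \mathbb{Z}$ such that $C$ is a minimal additive complement to $W$.
   Context: For $X, Y \subseteq \mathbb{Z}$, $X + Y = \{x + y : x \in X, y \in Y\}$. A set $C \subseteq \mathbb{Z}$ is an additive complement to $W \subseteq \mathbb{Z}$ if $C + W = \mathbb{Z}$; it is a minimal additive complement to $W$ if moreover no proper subset of $C$ is an additive complement to $W$. *)

theory Defs
  imports Main
begin

definition sumset :: "int set \<Rightarrow> int set \<Rightarrow> int set" where
  "sumset X Y = {x + y | x y. x \<in> X \<and> y \<in> Y}"

definition additive_complement :: "int set \<Rightarrow> int set \<Rightarrow> bool" where
  "additive_complement C W \<longleftrightarrow> sumset C W = UNIV"

definition minimal_additive_complement :: "int set \<Rightarrow> int set \<Rightarrow> bool" where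
  "minimal_additive_complement C W \<longleftrightarrow>
     additive_complement C W \<and> (\<forall>C'. C' \<subset> C \<longrightarrow> \<not> additive_complement C' W)"

end

theory Submission
  imports Defs
begin

text \<open>
  Choose K larger than four times the largest absolute value of an element of C and let W be
  the complement of the set of all K d - e with d, e distinct elements of C. Then K c can only
  be reached as c + (K c - c), so no element of C can be dropped. Conversely an integer n not
  of the form c + w would make both n - min C and n - max C of the shape K d - e; since K is
  large, the "digit" d and the remainder are unique, which forces n = K d with d in C, and
  n - d = K d - d is then in W.
\<close>

lemma sumsetI:
  assumes "x \<in> X" and "n - x \<in> Y"
  shows "n \<in> sumset X Y"
  unfolding sumset_def using assms by (intro CollectI exI[of _ x] exI[of _ "n - x"]) auto

definition forbidden_differences :: "int \<Rightarrow> int set \<Rightarrow> int set" where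
  "forbidden_differences K C = {K * d - e | d e. d \<in> C \<and> e \<in> C \<and> d \<noteq> e}"

lemma mult_diff_eq_imp_eq:
  fixes K a b u v :: int
  assumes "K * a - u = K * b - v" and "\<bar>u - v\<bar> < K"
  shows "a = b \<and> u = v"
proof -
  have eq: "K * (a - b) = u - v" using assms(1) by (simp add: algebra_simps)
  have "a = b"
  proof (rule ccontr)
    assume "a \<noteq> b"
    hence "K * 1 \<le> \<bar>K\<bar> * \<bar>a - b\<bar>"
      using assms(2) by (intro mult_mono) auto
    thus False using eq assms(2) by (simp add: abs_mult)
  qed
  thus ?thesis using eq by simp
qed

lemma not_additive_complement_proper_subset:
  assumes "C' \<subset> C"
  shows "\<not> additive_complement C' (- forbidden_differences K C)"
proof
  assume "additive_complement C' (- forbidden_differences K C)"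
  obtain c where c: "c \<in> C" "c \<notin> C'" using assms by blast
  have "K * c \<in> sumset C' (- forbidden_differences K C)"
    using \<open>additive_complement _ _\<close> by (simp add: additive_complement_def)
  then obtain x where "x \<in> C'" "K * c - x \<notin> forbidden_differences K C"
    unfolding sumset_def by force
  moreover have "x \<in> C" "x \<noteq> c" using \<open>x \<in> C'\<close> assms c by auto
  ultimately show False using c(1) unfolding forbidden_differences_def by blast
qed

lemma diag_notin_forbidden_differences:
  assumes bound: "\<And>c. c \<in> C \<Longrightarrow> 2 * \<bar>c\<bar> < K" and "d \<in> C"
  shows "K * d - d \<notin> forbidden_differences K C"
proof
  assume "K * d - d \<in> forbidden_differences K C"
  then obtain d' e where "d' \<in> C" "e \<in> C" "d' \<noteq> e" "K * d - d = K * d' - e"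
    unfolding forbidden_differences_def by blast
  moreover have "\<bar>d - e\<bar> < K" using bound[OF \<open>d \<in> C\<close>] bound[OF \<open>e \<in> C\<close>] by linarith
  ultimately show False using mult_diff_eq_imp_eq by blast
qed

lemma additive_complement_compl_forbidden_differences:
  assumes "finite C" "C \<noteq> {}" and bound: "\<And>c. c \<in> C \<Longrightarrow> 4 * \<bar>c\<bar> < K"
  shows "additive_complement C (- forbidden_differences K C)"
proof -
  let ?B = "forbidden_differences K C"
  have "n \<in> sumset C (- ?B)" for n
  proof (cases "\<exists>c \<in> C. n - c \<notin> ?B")
    case True
    then obtain c where "c \<in> C" "n - c \<notin> ?B" by blast
    then show ?thesis by (intro sumsetI) auto
  next
    case False
    define m M where "m = Min C" and "M = Max C"
    have "m \<in> C" "M \<in> C" and m_le: "\<And>c. c \<in> C \<Longrightarrow> m \<le> c" and le_M: "\<And>c. c \<in> C \<Longrightarrow> c \<le> M"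
      unfolding m_def M_def using assms(1,2) by auto
    from False \<open>m \<in> C\<close> \<open>M \<in> C\<close> obtain d1 e1 d2 e2
      where "d1 \<in> C" "e1 \<in> C" "n - m = K * d1 - e1" "e2 \<in> C" "n - M = K * d2 - e2"
      unfolding forbidden_differences_def by blast
    \<comment> \<open>n has two representations K d - r with remainders e1 - m \<ge> 0 \<ge> e2 - M, which must agree.\<close>
    moreover have "\<bar>(e1 - m) - (e2 - M)\<bar> < K"
      using bound[OF \<open>m \<in> C\<close>] bound[OF \<open>M \<in> C\<close>] bound[OF \<open>e1 \<in> C\<close>] bound[OF \<open>e2 \<in> C\<close>]
      by linarith
    ultimately have "e1 - m = e2 - M"
      using mult_diff_eq_imp_eq[of K d1 "e1 - m" d2 "e2 - M"] by (simp add: algebra_simps)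
    hence "e1 = m" using m_le[OF \<open>e1 \<in> C\<close>] le_M[OF \<open>e2 \<in> C\<close>] by simp
    hence "n - d1 = K * d1 - d1" using \<open>n - m = K * d1 - e1\<close> by simp
    moreover have "K * d1 - d1 \<notin> ?B"
      using bound \<open>d1 \<in> C\<close> by (intro diag_notin_forbidden_differences) fastforce+
    ultimately show ?thesis using \<open>d1 \<in> C\<close> by (intro sumsetI) auto
  qed
  thus ?thesis unfolding additive_complement_def by blast
qed

theorem theorem9:
  fixes C :: "int set"
  assumes "finite C" and "C \<noteq> {}"
  shows "\<exists>W :: int set. minimal_additive_complement C W"
proof -
  define K where "K = 4 * Max (abs ` C) + 1"
  have "4 * \<bar>c\<bar> < K" if "c \<in> C" for c
    using that assms(1) by (simp add: K_def)
  hence "minimal_additive_complement C (- forbidden_differences K C)"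
    unfolding minimal_additive_complement_def
    using additive_complement_compl_forbidden_differences[OF assms] not_additive_complement_proper_subset
    by blast
  thus ?thesis ..
qed

end
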